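(* Let $k$ be a positive integer, and let $T$ be a tree with $ex(T)=1$ such that $\ell_1, \ell_2, \ldots, \ell_{\alpha}$ are the terminal vertices of the exterior major vertex $v$ of $T$. Then $\dim_{k,f}(T)=\dim_f(T)$ if and only if $d(v, \ell_i) \le k$ for each $i\in\{1,2,\ldots,\alpha\}$.
   Context: $d(x,y)$ is the distance in the tree. For a function $g$ on $V(T)$ and $U\subseteq V(T)$, $g(U)=\sum_{s\in U}g(s)$. $R\{x,y\}=\{z: d(x,z)\ne d(y,z)\}$; $g:V(T)\to[0,1]$ is a resolving function if $g(R\{x,y\})\ge1$ for all distinct $x,y$; $\dim_f(T)$ is the minimum of $g(V(T))$ over resolving functions. For a positive integer $k$, $d_k(x,y)=\min\{d(x,y),k+1\}$, $R_k\{x,y\}=\{z: d_k(x,z)\neq d_k(y,z)\}$; $h:V(T)\to[0,1]$ is a $k$-truncated resolving function if $h(R_k\{x,y\})\ge 1$ for all distinct $x,y$, and $\dim_{k,f}(T)$ is the minimum of $h(V(T))$ over such $h$. A leaf has degree one; a major vertex has degree at least three. A leaf $\ell$ is a terminal vertex of a major vertex $v$ if $d(\ell,v)<d(\ell,w)$ for every other major vertex $w$; an exterior major vertex is a major vertex with at least one terminal vertex; $ex(T)$ is the number of exterior major vertices. *)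

theory Defs
  imports Main "HOL-Library.Extended_Real"
begin

definition walk :: "('a \<Rightarrow> 'a \<Rightarrow> bool) \<Rightarrow> 'a list \<Rightarrow> bool" where
  "walk adj xs \<longleftrightarrow> xs \<noteq> [] \<and> (\<forall>i. Suc i < length xs \<longrightarrow> adj (xs ! i) (xs ! Suc i))"

definition edges :: "('a \<Rightarrow> 'a \<Rightarrow> bool) \<Rightarrow> 'a set set" where
  "edges adj = {{x, y} | x y. adj x y}"

definition is_tree :: "'a set \<Rightarrow> ('a \<Rightarrow> 'a \<Rightarrow> bool) \<Rightarrow> bool" where
  "is_tree V adj \<longleftrightarrow> finite V \<and> V \<noteq> {}
     \<and> (\<forall>x y. adj x y \<longrightarrow> x \<in> V \<and> y \<in> V)
     \<and> (\<forall>x y. adj x y \<longrightarrow> adj y x)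
     \<and> (\<forall>x. \<not> adj x x)
     \<and> (\<forall>x\<in>V. \<forall>y\<in>V. \<exists>xs. walk adj xs \<and> hd xs = x \<and> last xs = y)
     \<and> card (edges adj) + 1 = card V"

definition gdist :: "('a \<Rightarrow> 'a \<Rightarrow> bool) \<Rightarrow> 'a \<Rightarrow> 'a \<Rightarrow> nat" where
  "gdist adj x y = (LEAST n. \<exists>xs. walk adj xs \<and> hd xs = x \<and> last xs = y \<and> length xs = Suc n)"

definition degree :: "('a \<Rightarrow> 'a \<Rightarrow> bool) \<Rightarrow> 'a \<Rightarrow> nat" where
  "degree adj v = card {u. adj v u}"

definition leaf :: "'a set \<Rightarrow> ('a \<Rightarrow> 'a \<Rightarrow> bool) \<Rightarrow> 'a \<Rightarrow> bool" where
  "leaf V adj l \<longleftrightarrow> l \<in> V \<and> degree adj l = 1"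

definition major :: "'a set \<Rightarrow> ('a \<Rightarrow> 'a \<Rightarrow> bool) \<Rightarrow> 'a \<Rightarrow> bool" where
  "major V adj v \<longleftrightarrow> v \<in> V \<and> degree adj v \<ge> 3"

definition terminal :: "'a set \<Rightarrow> ('a \<Rightarrow> 'a \<Rightarrow> bool) \<Rightarrow> 'a \<Rightarrow> 'a \<Rightarrow> bool" where
  "terminal V adj v l \<longleftrightarrow> major V adj v \<and> leaf V adj l
     \<and> (\<forall>w. major V adj w \<and> w \<noteq> v \<longrightarrow> gdist adj l v < gdist adj l w)"

definition exterior_major :: "'a set \<Rightarrow> ('a \<Rightarrow> 'a \<Rightarrow> bool) \<Rightarrow> 'a \<Rightarrow> bool" where
  "exterior_major V adj v \<longleftrightarrow> major V adj v \<and> (\<exists>l. terminal V adj v l)"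

definition ex_num :: "'a set \<Rightarrow> ('a \<Rightarrow> 'a \<Rightarrow> bool) \<Rightarrow> nat" where
  "ex_num V adj = card {v. exterior_major V adj v}"

definition Rset :: "'a set \<Rightarrow> ('a \<Rightarrow> 'a \<Rightarrow> bool) \<Rightarrow> 'a \<Rightarrow> 'a \<Rightarrow> 'a set" where
  "Rset V adj x y = {z \<in> V. gdist adj x z \<noteq> gdist adj y z}"

definition tdist :: "('a \<Rightarrow> 'a \<Rightarrow> bool) \<Rightarrow> nat \<Rightarrow> 'a \<Rightarrow> 'a \<Rightarrow> nat" where
  "tdist adj k x y = min (gdist adj x y) (k + 1)"

definition Rset_k :: "'a set \<Rightarrow> ('a \<Rightarrow> 'a \<Rightarrow> bool) \<Rightarrow> nat \<Rightarrow> 'a \<Rightarrow> 'a \<Rightarrow> 'a set" where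
  "Rset_k V adj k x y = {z \<in> V. tdist adj k x z \<noteq> tdist adj k y z}"

definition resolving_fun :: "'a set \<Rightarrow> ('a \<Rightarrow> 'a \<Rightarrow> bool) \<Rightarrow> ('a \<Rightarrow> real) \<Rightarrow> bool" where
  "resolving_fun V adj g \<longleftrightarrow> (\<forall>s\<in>V. 0 \<le> g s \<and> g s \<le> 1)
     \<and> (\<forall>x\<in>V. \<forall>y\<in>V. x \<noteq> y \<longrightarrow> sum g (Rset V adj x y) \<ge> 1)"

definition k_resolving_fun :: "'a set \<Rightarrow> ('a \<Rightarrow> 'a \<Rightarrow> bool) \<Rightarrow> nat \<Rightarrow> ('a \<Rightarrow> real) \<Rightarrow> bool" where
  "k_resolving_fun V adj k h \<longleftrightarrow> (\<forall>s\<in>V. 0 \<le> h s \<and> h s \<le> 1)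
     \<and> (\<forall>x\<in>V. \<forall>y\<in>V. x \<noteq> y \<longrightarrow> sum h (Rset_k V adj k x y) \<ge> 1)"

text \<open>Fractional (truncated) metric dimension: the minimum (attained, as an LP
  optimum) written as an infimum over the nonempty set of admissible values.\<close>
definition frac_dim :: "'a set \<Rightarrow> ('a \<Rightarrow> 'a \<Rightarrow> bool) \<Rightarrow> real" where
  "frac_dim V adj = Inf {sum g V | g. resolving_fun V adj g}"

definition frac_dim_k :: "'a set \<Rightarrow> ('a \<Rightarrow> 'a \<Rightarrow> bool) \<Rightarrow> nat \<Rightarrow> real" where
  "frac_dim_k V adj k = Inf {sum h V | h. k_resolving_fun V adj k h}"

end

theory Submission
  imports Defs
begin

text \<open>Since \<open>ex(T) = 1\<close>, the exterior major vertex \<open>v\<close> is the only major vertex: a major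
  vertex farthest from \<open>v\<close> would have a terminal vertex of its own. So \<open>T\<close> is a spider, the
  union of the legs (paths) that hang from the \<open>\<alpha>\<close> neighbours of \<open>v\<close>. Two neighbours of \<open>v\<close>
  are resolved only by the vertices of their own two legs, so a resolving function gives the
  legs weight \<open>1/2\<close> on average and \<open>dim\<^sub>f(T) \<ge> \<alpha>/2\<close>. Weight \<open>1/4\<close> on every neighbour of
  \<open>v\<close> and on every leaf attains \<open>\<alpha>/2\<close>, and is even \<open>k\<close>-truncated resolving when every leg
  has length at most \<open>k\<close>. If a leg is longer than \<open>k\<close>, its leaf and the neighbour of that
  leaf are \<open>k\<close>-resolved only by \<open>v\<close> and their own leg, which costs an extra \<open>1/2\<close>.\<close>

section \<open>Walks and distance\<close>

definition reach :: "('a \<Rightarrow> 'a \<Rightarrow> bool) \<Rightarrow> 'a \<Rightarrow> 'a \<Rightarrow> nat \<Rightarrow> bool" where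
  "reach adj x y n \<longleftrightarrow> (\<exists>xs. walk adj xs \<and> hd xs = x \<and> last xs = y \<and> length xs = Suc n)"

lemma gdist_eq_Least_reach: "gdist adj x y = (LEAST n. reach adj x y n)"
  unfolding gdist_def reach_def by simp

lemma reach_refl: "reach adj x x 0"
  unfolding reach_def walk_def by (rule exI[of _ "[x]"]) auto

lemma reach_0_iff: "reach adj x y 0 \<longleftrightarrow> x = y"
  using reach_refl[of adj x] unfolding reach_def walk_def by (auto simp: length_Suc_conv)

lemma reach_snoc:
  assumes "reach adj x y n" and "adj y z"
  shows "reach adj x z (Suc n)"
proof -
  obtain xs where xs: "walk adj xs" "hd xs = x" "last xs = y" "length xs = Suc n"
    using assms(1) unfolding reach_def by blast
  have "walk adj (xs @ [z])"
    unfolding walk_def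
  proof (intro conjI allI impI)
    fix i assume i: "Suc i < length (xs @ [z])"
    show "adj ((xs @ [z]) ! i) ((xs @ [z]) ! Suc i)"
    proof (cases "Suc i < length xs")
      case True
      then show ?thesis using xs(1) by (auto simp: walk_def nth_append)
    next
      case False
      then have "i = length xs - 1" "xs \<noteq> []" using i xs(4) by auto
      then show ?thesis using xs(3) assms(2) by (auto simp: nth_append last_conv_nth)
    qed
  qed simp
  then show ?thesis
    unfolding reach_def using xs by (intro exI[of _ "xs @ [z]"]) (auto simp: hd_append)
qed

lemma reach_Cons:
  assumes "adj z x" and "reach adj x y n"
  shows "reach adj z y (Suc n)"
proof -
  obtain xs where xs: "walk adj xs" "hd xs = x" "last xs = y" "length xs = Suc n"
    using assms(2) unfolding reach_def by blast
  have ne: "xs \<noteq> []" using xs(4) by auto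
  have "walk adj (z # xs)"
    unfolding walk_def
  proof (intro conjI allI impI)
    fix i assume i: "Suc i < length (z # xs)"
    show "adj ((z # xs) ! i) ((z # xs) ! Suc i)"
    proof (cases i)
      case 0
      then show ?thesis using assms(1) xs(2) ne by (simp add: hd_conv_nth)
    next
      case (Suc j)
      then show ?thesis using xs(1) i unfolding walk_def by auto
    qed
  qed simp
  then show ?thesis unfolding reach_def using xs ne by (intro exI[of _ "z # xs"]) auto
qed

lemma reach_SucE:
  assumes "reach adj x z (Suc n)"
  obtains y where "reach adj x y n" and "adj y z"
proof -
  obtain xs where xs: "walk adj xs" "hd xs = x" "last xs = z" "length xs = Suc (Suc n)"
    using assms unfolding reach_def by blast
  define ys where "ys = butlast xs"
  have len: "length ys = Suc n" using xs(4) by (simp add: ys_def)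
  then have "ys \<noteq> []" by auto
  have "walk adj ys" using xs(1) len \<open>ys \<noteq> []\<close> unfolding walk_def ys_def by (auto simp: nth_butlast)
  moreover have "hd ys = x" using xs(2) xs(4) unfolding ys_def
    by (cases xs) (auto simp: hd_conv_nth nth_butlast)
  moreover have "last ys = xs ! n"
    using len \<open>ys \<noteq> []\<close> by (simp add: last_conv_nth ys_def nth_butlast)
  moreover have "xs ! Suc n = z"
    using xs(3) xs(4) by (metis last_conv_nth list.size(3) nat.distinct(1) diff_Suc_1)
  moreover have "adj (xs ! n) (xs ! Suc n)" using xs(1) xs(4) unfolding walk_def by auto
  ultimately show ?thesis using that len unfolding reach_def by metis
qed

lemma reach_trans: "reach adj x y n \<Longrightarrow> reach adj y z m \<Longrightarrow> reach adj x z (n + m)"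
proof (induction m arbitrary: z)
  case 0
  then show ?case by (simp add: reach_0_iff)
next
  case (Suc m)
  obtain w where "reach adj y w m" "adj w z" using Suc.prems(2) by (elim reach_SucE)
  then show ?case using Suc.IH[OF Suc.prems(1)] reach_snoc by fastforce
qed

lemma reach_sym:
  assumes "\<And>a b. adj a b \<Longrightarrow> adj b a"
  shows "reach adj x y n \<Longrightarrow> reach adj y x n"
proof (induction n arbitrary: y)
  case 0
  then show ?case by (simp add: reach_0_iff)
next
  case (Suc n)
  obtain w where "reach adj x w n" "adj w y" using Suc.prems by (elim reach_SucE)
  then show ?case using Suc.IH reach_Cons assms by metis
qed

section \<open>Trees\<close>

locale tree =
  fixes V :: "'a set" and adj :: "'a \<Rightarrow> 'a \<Rightarrow> bool"
  assumes is_tree: "is_tree V adj"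
begin

lemma finite_V: "finite V"
  and adj_in_V: "adj x y \<Longrightarrow> x \<in> V \<and> y \<in> V"
  and adj_sym: "adj x y \<Longrightarrow> adj y x"
  and adj_irrefl: "\<not> adj x x"
  and card_edges: "card (edges adj) + 1 = card V"
  using is_tree unfolding is_tree_def by auto

lemma reach_exists:
  assumes "x \<in> V" and "y \<in> V"
  shows "\<exists>n. reach adj x y n"
proof -
  obtain xs where xs: "walk adj xs" "hd xs = x" "last xs = y"
    using is_tree assms unfolding is_tree_def by blast
  then have "length xs = Suc (length xs - 1)" unfolding walk_def by simp
  then show ?thesis unfolding reach_def using xs by blast
qed

lemma reach_gdist: "x \<in> V \<Longrightarrow> y \<in> V \<Longrightarrow> reach adj x y (gdist adj x y)"
  unfolding gdist_eq_Least_reach using reach_exists by (rule LeastI_ex)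

lemma gdist_le: "reach adj x y n \<Longrightarrow> gdist adj x y \<le> n"
  unfolding gdist_eq_Least_reach by (rule Least_le)

lemma gdist_self [simp]: "gdist adj x x = 0"
  using gdist_le[OF reach_refl] by simp

lemma gdist_eq_0_iff: "x \<in> V \<Longrightarrow> y \<in> V \<Longrightarrow> gdist adj x y = 0 \<longleftrightarrow> x = y"
  using reach_gdist[of x y] by (auto simp: reach_0_iff)

lemma gdist_commute: "x \<in> V \<Longrightarrow> y \<in> V \<Longrightarrow> gdist adj x y = gdist adj y x"
  using gdist_le reach_gdist reach_sym[of adj, OF adj_sym] by (metis le_antisym)

lemma gdist_adj: "adj x y \<Longrightarrow> gdist adj x y = 1"
  using gdist_le[OF reach_snoc[OF reach_refl]] gdist_eq_0_iff adj_in_V adj_irrefl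
  by (metis One_nat_def le_Suc_eq le_zero_eq)

lemma gdist_triangle:
  "x \<in> V \<Longrightarrow> y \<in> V \<Longrightarrow> z \<in> V \<Longrightarrow> gdist adj x z \<le> gdist adj x y + gdist adj y z"
  using gdist_le[OF reach_trans[OF reach_gdist reach_gdist]] .

lemma gdist_adj_le: "adj y z \<Longrightarrow> x \<in> V \<Longrightarrow> gdist adj x z \<le> gdist adj x y + 1"
  using gdist_triangle[of x y z] gdist_adj adj_in_V by fastforce

lemma parent_exists:
  assumes r: "r \<in> V" and x: "x \<in> V" and "x \<noteq> r"
  shows "\<exists>y. adj y x \<and> gdist adj r y + 1 = gdist adj r x"
proof -
  obtain m where m: "gdist adj r x = Suc m"
    using gdist_eq_0_iff[OF r x] \<open>x \<noteq> r\<close> by (cases "gdist adj r x") auto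
  then obtain y where y: "reach adj r y m" "adj y x"
    using reach_gdist[OF r x] by (metis reach_SucE)
  have "gdist adj r y \<le> m" using y(1) by (rule gdist_le)
  moreover have "gdist adj r x \<le> gdist adj r y + 1" using gdist_adj_le y(2) r by blast
  ultimately show ?thesis using y m by (intro exI[of _ y]) auto
qed

definition parent :: "'a \<Rightarrow> 'a \<Rightarrow> 'a" where
  "parent r x = (SOME y. adj y x \<and> gdist adj r y + 1 = gdist adj r x)"

lemma parent:
  "r \<in> V \<Longrightarrow> x \<in> V \<Longrightarrow> x \<noteq> r
     \<Longrightarrow> adj (parent r x) x \<and> gdist adj r (parent r x) + 1 = gdist adj r x"
  unfolding parent_def using parent_exists by (rule someI_ex)

lemma finite_edges: "finite (edges adj)"
proof -
  have "edges adj \<subseteq> Pow V" unfolding edges_def using adj_in_V by auto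
  then show ?thesis using finite_V by (meson finite_Pow_iff finite_subset)
qed

text \<open>The only place where acyclicity, in the form of the edge count, enters.\<close>

lemma edges_eq_parent_edges:
  assumes r: "r \<in> V"
  shows "edges adj = (\<lambda>x. {x, parent r x}) ` (V - {r})"
proof -
  let ?f = "\<lambda>x. {x, parent r x}"
  have sub: "?f ` (V - {r}) \<subseteq> edges adj"
    unfolding edges_def using parent[OF r] by blast
  have "inj_on ?f (V - {r})"
  proof (rule inj_onI)
    fix x y assume x: "x \<in> V - {r}" and y: "y \<in> V - {r}" and eq: "?f x = ?f y"
    show "x = y"
    proof (rule ccontr)
      assume "x \<noteq> y"
      then have "x = parent r y" "y = parent r x" using eq by (auto simp: doubleton_eq_iff)
      then show False using parent[OF r, of y] parent[OF r, of x] x y by auto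
    qed
  qed
  then have "card (?f ` (V - {r})) = card (edges adj)"
    using card_image r finite_V card_edges by (metis card_Diff_singleton add_diff_cancel_right')
  then show ?thesis using card_subset_eq[OF finite_edges sub] by simp
qed

lemma adj_gdist_cases:
  assumes r: "r \<in> V" and "adj x y"
  shows "gdist adj r y = gdist adj r x + 1 \<or> gdist adj r x = gdist adj r y + 1"
proof -
  have "{x, y} \<in> edges adj" unfolding edges_def using \<open>adj x y\<close> by blast
  then obtain z where "z \<in> V - {r}" "{x, y} = {z, parent r z}"
    using edges_eq_parent_edges[OF r] by blast
  then show ?thesis using parent[OF r, of z] by (auto simp: doubleton_eq_iff)
qed

lemma parent_unique:
  assumes r: "r \<in> V" and "adj y x" and "gdist adj r y + 1 = gdist adj r x"
  shows "y = parent r x"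
proof -
  have "{y, x} \<in> edges adj" unfolding edges_def using \<open>adj y x\<close> by blast
  then obtain z where "z \<in> V - {r}" "{y, x} = {z, parent r z}"
    using edges_eq_parent_edges[OF r] by blast
  then show ?thesis using parent[OF r, of z] assms(3) by (auto simp: doubleton_eq_iff)
qed

lemma gdist_adj_not_parent:
  assumes r: "r \<in> V" and "adj x y" and "y \<noteq> parent r x"
  shows "gdist adj r y = gdist adj r x + 1"
  using adj_gdist_cases[OF assms(1,2)] parent_unique[OF r adj_sym[OF assms(2)]] assms(3) by auto

text \<open>\<open>branch z c\<close>, for a neighbour \<open>c\<close> of \<open>z\<close>, is the component of \<open>T - z\<close> containing \<open>c\<close>,
  described as the set of vertices whose shortest path to \<open>z\<close> ends with the edge \<open>cz\<close>.\<close>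

definition branch :: "'a \<Rightarrow> 'a \<Rightarrow> 'a set" where
  "branch z c = {y \<in> V. gdist adj y c + 1 = gdist adj y z}"

lemma branch_subset_V: "branch z c \<subseteq> V"
  unfolding branch_def by auto

lemma finite_branch: "finite (branch z c)"
  using finite_subset[OF branch_subset_V finite_V] .

lemma centre_notin_branch: "z \<notin> branch z c"
  unfolding branch_def by auto

lemma self_in_branch: "adj z c \<Longrightarrow> c \<in> branch z c"
  unfolding branch_def using gdist_adj adj_sym adj_in_V by auto

lemma in_some_branch:
  assumes "z \<in> V" and "y \<in> V" and "y \<noteq> z"
  obtains c where "adj z c" and "y \<in> branch z c"
  using parent[OF assms(2,1)] assms adj_sym unfolding branch_def by force

lemma branch_unique:
  assumes "adj z c" and "adj z c'" and "y \<in> branch z c" and "y \<in> branch z c'"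
  shows "c = c'"
proof -
  have "y \<in> V" "gdist adj y c + 1 = gdist adj y z" "gdist adj y c' + 1 = gdist adj y z"
    using assms(3,4) unfolding branch_def by auto
  then show ?thesis using parent_unique adj_sym assms(1,2) by metis
qed

lemma parent_in_branch:
  assumes zc: "adj z c" and y: "y \<in> branch z c"
    and py: "adj p y" and pd: "gdist adj z p + 1 = gdist adj z y" and "p \<noteq> z"
  shows "p \<in> branch z c"
proof -
  have z: "z \<in> V" and c: "c \<in> V" and p: "p \<in> V" using adj_in_V zc py by auto
  have yV: "y \<in> V" and yc: "gdist adj y c + 1 = gdist adj y z" using y unfolding branch_def by auto
  have "y \<noteq> c"
  proof
    assume "y = c"
    then have "gdist adj z p = 0" using gdist_adj zc pd by simp
    then show False using gdist_eq_0_iff z p \<open>p \<noteq> z\<close> by auto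
  qed
  define q where "q = parent c y"
  have q: "adj q y" "gdist adj c q + 1 = gdist adj c y" using parent[OF c yV \<open>y \<noteq> c\<close>] q_def by auto
  have qV: "q \<in> V" using adj_in_V q by auto
  have "gdist adj z q \<le> gdist adj z c + gdist adj c q" using gdist_triangle z c qV by blast
  also have "\<dots> = 1 + gdist adj c q" using gdist_adj zc by simp
  finally have "gdist adj z q + 1 \<le> gdist adj z y"
    using q(2) yc gdist_commute[OF yV c] gdist_commute[OF yV z] by simp
  then have "gdist adj z q + 1 = gdist adj z y" using adj_gdist_cases[OF z q(1)] by auto
  then have "q = p" using parent_unique[OF z q(1)] parent_unique[OF z py pd] by simp
  then show ?thesis
    using q(2) yc pd p gdist_commute[OF yV c] gdist_commute[OF yV z] gdist_commute[OF p c]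
      gdist_commute[OF p z]
    unfolding branch_def by simp
qed

lemma child_in_branch:
  assumes zc: "adj z c" and y: "y \<in> branch z c"
    and yx: "adj y x" and xd: "gdist adj z x = gdist adj z y + 1"
  shows "x \<in> branch z c"
proof -
  have z: "z \<in> V" and c: "c \<in> V" and x: "x \<in> V" using adj_in_V zc yx by auto
  have yV: "y \<in> V" and yc: "gdist adj y c + 1 = gdist adj y z" using y unfolding branch_def by auto
  have "gdist adj x c \<le> gdist adj x y + gdist adj y c" using gdist_triangle x yV c by blast
  moreover have "gdist adj x z \<le> gdist adj x c + gdist adj c z" using gdist_triangle x c z by blast
  moreover have "gdist adj x y = 1" "gdist adj c z = 1" using gdist_adj adj_sym yx zc by auto
  ultimately show ?thesis
    using xd yc x gdist_commute[OF x z] gdist_commute[OF yV z] unfolding branch_def by simp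
qed

text \<open>Induction on the depth of \<open>y\<close> below \<open>z\<close>: the claim for the parent \<open>p\<close> of \<open>y\<close> (seen
  from \<open>z\<close>) extends to \<open>y\<close>, because the parent of \<open>p\<close> seen from \<open>x\<close> is its parent seen from
  \<open>z\<close>, hence not \<open>y\<close>.\<close>

lemma gdist_across_branches:
  assumes zu: "adj z u" and zw: "adj z w" and "u \<noteq> w"
    and x: "x \<in> branch z u" and y: "y \<in> branch z w"
  shows "gdist adj x y = gdist adj x z + gdist adj z y"
proof -
  have z: "z \<in> V" using adj_in_V zw by auto
  have xV: "x \<in> V" and xu: "gdist adj x u + 1 = gdist adj x z" using x unfolding branch_def by auto
  have u_parent: "u = parent x z" using parent_unique[OF xV adj_sym[OF zu] xu] .
  have "y \<in> insert z (branch z w) \<Longrightarrow> gdist adj x y = gdist adj x z + gdist adj z y" for y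
  proof (induction "gdist adj z y" arbitrary: y rule: less_induct)
    case less
    show ?case
    proof (cases "y = z")
      case False
      then have yB: "y \<in> branch z w" and yV: "y \<in> V" using less.prems branch_subset_V by auto
      define p where "p = parent z y"
      have p: "adj p y" "gdist adj z p + 1 = gdist adj z y"
        using parent[OF z yV False] p_def by auto
      have pB: "p \<in> insert z (branch z w)" using parent_in_branch[OF zw yB p] by blast
      have "gdist adj z p < gdist adj z y" using p(2) by simp
      then have IHp: "gdist adj x p = gdist adj x z + gdist adj z p" using less.hyps pB by blast
      have "y \<noteq> parent x p"
      proof (cases "p = z")
        case True
        then have "adj z y" using p(1) by simp
        then have "y = w" using branch_unique[OF _ zw self_in_branch yB] by blast
        then show ?thesis using True u_parent \<open>u \<noteq> w\<close> by simp
      next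
        case False
        have pV: "p \<in> V" using adj_in_V p(1) by auto
        define q where "q = parent z p"
        have q: "adj q p" "gdist adj z q + 1 = gdist adj z p"
          using parent[OF z pV False] q_def by auto
        have "p \<in> branch z w" using pB False by simp
        then have "q \<in> insert z (branch z w)" using parent_in_branch[OF zw _ q] by blast
        moreover have "gdist adj z q < gdist adj z y" using q(2) p(2) by simp
        ultimately have "gdist adj x q = gdist adj x z + gdist adj z q" using less.hyps by blast
        then have "gdist adj x q + 1 = gdist adj x p" using IHp q(2) by simp
        then have "q = parent x p" using parent_unique[OF xV q(1)] by simp
        moreover have "q \<noteq> y" using q(2) p(2) by auto
        ultimately show ?thesis by simp
      qed
      then have "gdist adj x y = gdist adj x p + 1" using gdist_adj_not_parent[OF xV p(1)] by blast
      then show ?thesis using IHp p(2) by simp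
    qed simp
  qed
  then show ?thesis using y by blast
qed

lemma farthest_in_branch_is_leaf:
  assumes zc: "adj z c" and l: "l \<in> branch z c"
    and far: "\<And>y. y \<in> branch z c \<Longrightarrow> gdist adj z y \<le> gdist adj z l"
  shows "leaf V adj l"
proof -
  have z: "z \<in> V" using adj_in_V zc by auto
  have lV: "l \<in> V" and "l \<noteq> z" using l branch_subset_V centre_notin_branch by auto
  define p where "p = parent z l"
  have p: "adj p l" "gdist adj z p + 1 = gdist adj z l" using parent[OF z lV \<open>l \<noteq> z\<close>] p_def by auto
  have "t = p" if "adj l t" for t
  proof (rule ccontr)
    assume "t \<noteq> p"
    then have "gdist adj z t = gdist adj z l + 1"
      using gdist_adj_not_parent[OF z that] p_def by simp
    then show False using child_in_branch[OF zc l that] far[of t] by simp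
  qed
  then have "{t. adj l t} = {p}" using p(1) adj_sym by auto
  then show ?thesis unfolding leaf_def degree_def using lV by simp
qed

lemma branch_has_farthest_leaf:
  assumes "adj z c"
  obtains l where "l \<in> branch z c" and "leaf V adj l"
    and "\<And>y. y \<in> branch z c \<Longrightarrow> gdist adj z y \<le> gdist adj z l"
proof -
  obtain l where l: "l \<in> branch z c" "Max (gdist adj z ` branch z c) = gdist adj z l"
    using obtains_MAX[OF finite_branch] self_in_branch[OF assms] by blast
  then have "gdist adj z y \<le> gdist adj z l" if "y \<in> branch z c" for y
    using that finite_branch by (metis Max_ge finite_imageI imageI)
  then show ?thesis using that l(1) farthest_in_branch_is_leaf[OF assms l(1)] by blast
qed

text \<open>The farthest leaf of a branch at \<open>w\<close> pointing away from \<open>v\<close> is a terminal vertex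
  of \<open>w\<close>: a major vertex in that branch would be farther from \<open>v\<close> than \<open>w\<close>, and every other
  major vertex is reached from the leaf through \<open>w\<close>.\<close>

lemma farthest_major_is_exterior:
  assumes vV: "v \<in> V" and w: "major V adj w" and "w \<noteq> v"
    and farthest: "\<And>w'. major V adj w' \<Longrightarrow> gdist adj v w' \<le> gdist adj v w"
  shows "exterior_major V adj w"
proof -
  have wV: "w \<in> V" and deg: "3 \<le> card {u. adj w u}" using w unfolding major_def degree_def by auto
  define q where "q = parent v w"
  have q: "adj q w" "gdist adj v q + 1 = gdist adj v w" using parent[OF vV wV \<open>w \<noteq> v\<close>] q_def by auto
  have "\<not> {u. adj w u} \<subseteq> {q}" using card_mono[of "{q}" "{u. adj w u}"] deg by auto
  then obtain c where wc: "adj w c" and "c \<noteq> q" by blast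
  obtain l where l: "l \<in> branch w c" "leaf V adj l" using branch_has_farthest_leaf[OF wc] by blast
  have "q \<in> V" using adj_in_V q(1) by auto
  then have v_branch: "v \<in> branch w q"
    using q(2) vV wV gdist_commute[of v q] gdist_commute[of v w] unfolding branch_def by simp
  have "gdist adj l w < gdist adj l w'" if w': "major V adj w'" "w' \<noteq> w" for w'
  proof -
    have w'V: "w' \<in> V" using w' unfolding major_def by auto
    obtain c' where wc': "adj w c'" and w'c': "w' \<in> branch w c'"
      using in_some_branch[OF wV w'V w'(2)] .
    have "0 < gdist adj w w'" using gdist_eq_0_iff[OF wV w'V] w'(2) by auto
    moreover have "c' \<noteq> c"
    proof
      assume "c' = c"
      then have "gdist adj v w' = gdist adj v w + gdist adj w w'"
        using gdist_across_branches[OF adj_sym[OF q(1)] wc \<open>c \<noteq> q\<close>[symmetric] v_branch] w'c' by simp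
      then show False using farthest[OF w'(1)] \<open>0 < gdist adj w w'\<close> by simp
    qed
    then have "gdist adj l w' = gdist adj l w + gdist adj w w'"
      using gdist_across_branches[OF wc wc' _ l(1) w'c'] by simp
    ultimately show ?thesis by simp
  qed
  then show ?thesis unfolding exterior_major_def terminal_def using w l(2) by blast
qed

lemma major_unique_if_ex_num_eq_1:
  assumes ex1: "ex_num V adj = 1" and ext: "exterior_major V adj v" and w0: "major V adj w0"
  shows "w0 = v"
proof (rule ccontr)
  assume "w0 \<noteq> v"
  have vV: "v \<in> V" using ext unfolding exterior_major_def major_def by auto
  let ?M = "{w. major V adj w}"
  have "finite ?M" using finite_V unfolding major_def by (simp add: Collect_conj_eq)
  then obtain w where w: "major V adj w" "Max (gdist adj v ` ?M) = gdist adj v w"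
    using obtains_MAX[of ?M] w0 by blast
  have farthest: "gdist adj v w' \<le> gdist adj v w" if "major V adj w'" for w'
    using that \<open>finite ?M\<close> w(2) by (metis Max_ge finite_imageI imageI mem_Collect_eq)
  have "w \<noteq> v"
    using farthest[OF w0] \<open>w0 \<noteq> v\<close> gdist_eq_0_iff[OF vV] w0 unfolding major_def by force
  then have "exterior_major V adj w" using farthest_major_is_exterior[OF vV w(1)] farthest by blast
  then show False
    using ex1 ext \<open>w \<noteq> v\<close> unfolding ex_num_def
      by (metis card_1_singletonE singletonD mem_Collect_eq)
qed

end

section \<open>Spiders\<close>

locale spider = tree +
  fixes v :: 'a
  assumes major_v: "major V adj v"
    and major_unique: "\<And>w. major V adj w \<Longrightarrow> w = v"
begin

definition N :: "'a set" where
  "N = {u. adj v u}"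

abbreviation leg :: "'a \<Rightarrow> 'a set" where
  "leg u \<equiv> branch v u"

abbreviation depth :: "'a \<Rightarrow> nat" where
  "depth x \<equiv> gdist adj v x"

lemma v_in_V: "v \<in> V"
  using major_v unfolding major_def by simp

lemma N_subset_V: "N \<subseteq> V"
  unfolding N_def using adj_in_V by auto

lemma finite_N: "finite N"
  using finite_subset[OF N_subset_V finite_V] .

lemma card_N_ge_3: "3 \<le> card N"
  using major_v unfolding major_def degree_def N_def by simp

lemma leg_subset_V: "leg u \<subseteq> V"
  by (rule branch_subset_V)

lemma self_in_leg: "u \<in> N \<Longrightarrow> u \<in> leg u"
  unfolding N_def by (simp add: self_in_branch)

lemma depth_N: "u \<in> N \<Longrightarrow> depth u = 1"
  unfolding N_def by (simp add: gdist_adj)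

lemma depth_leg: "x \<in> leg u \<Longrightarrow> depth x = gdist adj x u + 1"
  unfolding branch_def using gdist_commute v_in_V by auto

lemma depth_leg_pos: "x \<in> leg u \<Longrightarrow> 0 < depth x"
  using depth_leg by simp

lemma degree_le_2: "x \<in> V \<Longrightarrow> x \<noteq> v \<Longrightarrow> card {u. adj x u} \<le> 2"
  using major_unique[of x] unfolding major_def degree_def by fastforce

lemma in_some_leg:
  assumes "x \<in> V" and "x \<noteq> v"
  obtains u where "u \<in> N" and "x \<in> leg u"
  using in_some_branch[OF v_in_V assms] unfolding N_def by blast

lemma leg_unique: "u \<in> N \<Longrightarrow> w \<in> N \<Longrightarrow> x \<in> leg u \<Longrightarrow> x \<in> leg w \<Longrightarrow> u = w"
  unfolding N_def using branch_unique by blast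

lemma gdist_distinct_legs:
  assumes "u \<in> N" and "w \<in> N" and "u \<noteq> w" and x: "x \<in> leg u" and y: "y \<in> leg w"
  shows "gdist adj x y = depth x + depth y"
  using gdist_across_branches[OF _ _ \<open>u \<noteq> w\<close> x y] assms(1,2) x gdist_commute[OF _ v_in_V]
    leg_subset_V unfolding N_def by auto

lemma parent_v:
  assumes "x \<in> V" and "x \<noteq> v"
  shows "adj (parent v x) x" and "depth (parent v x) + 1 = depth x"
  using parent[OF v_in_V assms] by auto

lemma parent_in_leg:
  assumes "u \<in> N" and "x \<in> leg u" and "2 \<le> depth x"
  shows "parent v x \<in> leg u"
proof -
  have x: "x \<in> V" "x \<noteq> v" using assms(2) leg_subset_V centre_notin_branch by auto
  have "parent v x \<noteq> v" using parent_v(2)[OF x] assms(3) by auto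
  then show ?thesis using parent_in_branch assms(1,2) parent_v[OF x] unfolding N_def by blast
qed

text \<open>Each leg is a path: two vertices of the same depth with a common parent would give that
  parent degree at least three.\<close>

lemma leg_depth_inj:
  assumes u: "u \<in> N"
  shows "x \<in> leg u \<Longrightarrow> y \<in> leg u \<Longrightarrow> depth x = depth y \<Longrightarrow> x = y"
proof (induction "depth x" arbitrary: x y rule: less_induct)
  case less
  have x: "x \<in> V" "x \<noteq> v" and y: "y \<in> V" "y \<noteq> v"
    using less.prems leg_subset_V centre_notin_branch by auto
  show ?case
  proof (cases "depth x = 1")
    case True
    then have "gdist adj x u = 0" "gdist adj y u = 0" using depth_leg less.prems by auto
    then show ?thesis using gdist_eq_0_iff x y u N_subset_V by auto
  next
    case False
    then have "2 \<le> depth x" using depth_leg_pos[OF less.prems(1)] by simp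
    define p where "p = parent v x"
    have px: "adj p x" "depth p + 1 = depth x" using parent_v[OF x] p_def by auto
    have "parent v y = p"
      using less.hyps[of p "parent v y"] parent_in_leg[OF u] less.prems \<open>2 \<le> depth x\<close>
        parent_v(2)[OF y] px(2) p_def by simp
    then have py: "adj p y" using parent_v(1)[OF y] by simp
    have p: "p \<in> V" "p \<noteq> v" using px adj_in_V \<open>2 \<le> depth x\<close> by auto
    define q where "q = parent v p"
    have q: "adj q p" "depth q + 1 = depth p" using parent_v[OF p] q_def by auto
    show "x = y"
    proof (rule ccontr)
      assume "x \<noteq> y"
      moreover have "q \<noteq> x" "q \<noteq> y" using q px less.prems(3) by auto
      ultimately have "card {q, x, y} = 3" by auto
      moreover have "{q, x, y} \<subseteq> {t. adj p t}" using q px py adj_sym by auto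
      ultimately have "3 \<le> card {t. adj p t}"
        using card_mono[OF finite_subset[OF _ finite_V]] adj_in_V by (metis mem_Collect_eq subsetI)
      then show False using degree_le_2[OF p] by simp
    qed
  qed
qed

lemma leg_ancestor:
  assumes u: "u \<in> N"
  shows "x \<in> leg u \<Longrightarrow> depth x = a + k \<Longrightarrow> 0 < a \<Longrightarrow> \<exists>z\<in>leg u. depth z = a \<and> gdist adj z x = k"
proof (induction k arbitrary: x)
  case 0
  then show ?case by auto
next
  case (Suc k)
  have x: "x \<in> V" "x \<noteq> v" using Suc.prems leg_subset_V centre_notin_branch by auto
  define p where "p = parent v x"
  have p: "adj p x" "depth p + 1 = depth x" using parent_v[OF x] p_def by auto
  have "p \<in> leg u" using parent_in_leg[OF u Suc.prems(1)] Suc.prems(2,3) p_def by simp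
  then obtain z where z: "z \<in> leg u" "depth z = a" "gdist adj z p = k"
    using Suc.IH p(2) Suc.prems(2,3) by auto
  have zV: "z \<in> V" and pV: "p \<in> V" using z(1) p(1) leg_subset_V adj_in_V by auto
  have "gdist adj z x \<le> Suc k" using gdist_adj_le[OF p(1) zV] z(3) by simp
  moreover have "depth x \<le> depth z + gdist adj z x" using gdist_triangle v_in_V zV x(1) by blast
  ultimately show ?case using z Suc.prems(2) by (intro bexI[of _ z]) auto
qed

lemma gdist_same_leg:
  assumes "u \<in> N" and "x \<in> leg u" and "y \<in> leg u" and "depth x \<le> depth y"
  shows "gdist adj x y = depth y - depth x"
proof -
  obtain z where "z \<in> leg u" "depth z = depth x" "gdist adj z y = depth y - depth x"
    using leg_ancestor[OF assms(1,3), of "depth x" "depth y - depth x"] assms(2,4) depth_leg_pos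
    by auto
  then show ?thesis using leg_depth_inj[OF assms(1) _ assms(2)] by metis
qed

lemma leaf_in_some_leg:
  assumes "leaf V adj l"
  obtains u where "u \<in> N" and "l \<in> leg u"
  using in_some_leg assms major_v unfolding leaf_def major_def by force

text \<open>A leaf ends its leg: a deeper vertex of the leg would have an ancestor one level
  below the leaf, adjacent to it, giving the leaf a second neighbour.\<close>

lemma depth_le_leaf:
  assumes u: "u \<in> N" and l: "l \<in> leg u" "leaf V adj l" and x: "x \<in> leg u"
  shows "depth x \<le> depth l"
proof (rule ccontr)
  assume "\<not> depth x \<le> depth l"
  then obtain z where z: "z \<in> leg u" "depth z = depth l + 1"
    using leg_ancestor[OF u x, of "depth l + 1" "depth x - depth l - 1"] by auto
  have zV: "z \<in> V" "z \<noteq> v" and lV: "l \<in> V" "l \<noteq> v"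
    using z(1) l(1) leg_subset_V centre_notin_branch by auto
  have "2 \<le> depth z" using z(2) depth_leg_pos[OF l(1)] by simp
  then have "parent v z = l"
    using leg_depth_inj[OF u parent_in_leg[OF u z(1)] l(1)] parent_v(2)[OF zV] z(2) by simp
  then have "{parent v l, z} \<subseteq> {t. adj l t}"
    using parent_v[OF lV] parent_v(1)[OF zV] adj_sym by auto
  moreover have "parent v l \<noteq> z" using parent_v(2)[OF lV] z(2) by auto
  ultimately have "2 \<le> card {t. adj l t}"
    using card_mono[OF finite_subset[OF _ finite_V]] adj_in_V
      by (metis card_2_iff mem_Collect_eq subsetI)
  then show False using l(2) unfolding leaf_def degree_def by simp
qed

definition leg_end :: "'a \<Rightarrow> 'a" where
  "leg_end u = (SOME l. l \<in> leg u \<and> leaf V adj l)"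

lemma leg_end:
  assumes "u \<in> N"
  shows "leg_end u \<in> leg u" and "leaf V adj (leg_end u)"
proof -
  obtain l where "l \<in> leg u" "leaf V adj l"
    using branch_has_farthest_leaf assms unfolding N_def by blast
  then show "leg_end u \<in> leg u" "leaf V adj (leg_end u)"
    unfolding leg_end_def by (metis (mono_tags, lifting) someI)+
qed

lemma depth_le_leg_end: "u \<in> N \<Longrightarrow> x \<in> leg u \<Longrightarrow> depth x \<le> depth (leg_end u)"
  using depth_le_leaf leg_end by blast

lemma leaf_eq_leg_end: "u \<in> N \<Longrightarrow> l \<in> leg u \<Longrightarrow> leaf V adj l \<Longrightarrow> l = leg_end u"
  using leg_depth_inj depth_le_leaf leg_end by (meson le_antisym)

lemma leaves_eq_leg_ends: "{l. leaf V adj l} = leg_end ` N"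
  using leaf_in_some_leg leaf_eq_leg_end leg_end by blast

lemma card_leaves: "card {l. leaf V adj l} = card N"
proof -
  have "inj_on leg_end N" using leg_end(1) leg_unique by (metis inj_onI)
  then show ?thesis using leaves_eq_leg_ends card_image by metis
qed

end

section \<open>Fractional resolving functions\<close>

lemma sum_ge_half_card_if_pairwise_ge_1:
  fixes s :: "'b \<Rightarrow> real"
  assumes fin: "finite I" and card: "2 \<le> card I"
    and pair: "\<And>i j. i \<in> I \<Longrightarrow> j \<in> I \<Longrightarrow> i \<noteq> j \<Longrightarrow> 1 \<le> s i + s j"
  shows "card I / 2 \<le> sum s I"
proof (cases "\<forall>i\<in>I. 1/2 \<le> s i")
  case True
  then have "sum (\<lambda>_. 1/2) I \<le> sum s I" by (intro sum_mono) auto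
  then show ?thesis by simp
next
  case False
  then obtain m where m: "m \<in> I" "s m < 1/2" by auto
  have "sum (\<lambda>_. 1 - s m) (I - {m}) \<le> sum s (I - {m})"
    using pair[of m] m by (intro sum_mono) (auto simp: algebra_simps)
  then have "(card I - 1) * (1 - s m) \<le> sum s (I - {m})"
    using m fin by (simp add: card_Diff_singleton)
  moreover have "sum s I = s m + sum s (I - {m})" using m fin by (simp add: sum.remove)
  moreover have "real (card I - 1) = real (card I) - 1" using card by simp
  moreover have "0 \<le> (real (card I) - 2) * (1/2 - s m)" using card m by simp
  ultimately show ?thesis by (auto simp: algebra_simps)
qed

lemma Rset_k_commute: "Rset_k V adj k x y = Rset_k V adj k y x"
  unfolding Rset_k_def by auto

lemma Rset_k_subset_V: "Rset_k V adj k x y \<subseteq> V"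
  unfolding Rset_k_def by auto

lemma Rset_k_subset_Rset: "Rset_k V adj k x y \<subseteq> Rset V adj x y"
  unfolding Rset_k_def Rset_def tdist_def by auto

lemma Rset_kI:
  "z \<in> V \<Longrightarrow> gdist adj x z \<le> k \<Longrightarrow> gdist adj x z \<noteq> gdist adj y z \<Longrightarrow> z \<in> Rset_k V adj k x y"
  unfolding Rset_k_def tdist_def by auto

lemma k_resolving_fun_imp_resolving_fun:
  assumes "finite V" and "k_resolving_fun V adj k h"
  shows "resolving_fun V adj h"
  unfolding resolving_fun_def
proof (intro conjI ballI impI)
  fix x y assume "x \<in> V" "y \<in> V" "x \<noteq> y"
  then have "1 \<le> sum h (Rset_k V adj k x y)" using assms(2) unfolding k_resolving_fun_def by auto
  also have "\<dots> \<le> sum h (Rset V adj x y)"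
    using assms Rset_k_subset_Rset[of V adj k x y] unfolding k_resolving_fun_def
    by (intro sum_mono2) (auto simp: Rset_def)
  finally show "1 \<le> sum h (Rset V adj x y)" .
qed (use assms(2) in \<open>auto simp: k_resolving_fun_def\<close>)

lemma (in tree) k_resolving_fun_one: "k_resolving_fun V adj k (\<lambda>_. 1)"
  unfolding k_resolving_fun_def
proof (intro conjI ballI impI)
  fix x y assume "x \<in> V" "y \<in> V" "x \<noteq> y"
  then have "x \<in> Rset_k V adj k x y"
    using gdist_eq_0_iff[of y x] by (intro Rset_kI) auto
  then show "1 \<le> sum (\<lambda>_. 1::real) (Rset_k V adj k x y)"
    using finite_subset[OF Rset_k_subset_V finite_V] by (simp add: Suc_le_eq card_gt_0_iff) blast
qed auto

context spider
begin

lemma sum_V_eq_legs: "sum h V = h v + (\<Sum>u\<in>N. sum h (leg u))"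
proof -
  have V: "V = insert v (\<Union>u\<in>N. leg u)"
  proof
    show "V \<subseteq> insert v (\<Union>u\<in>N. leg u)" using in_some_leg by blast
    show "insert v (\<Union>u\<in>N. leg u) \<subseteq> V" using v_in_V leg_subset_V by blast
  qed
  have "sum h V = h v + sum h (\<Union>u\<in>N. leg u)"
    by (subst V) (simp add: finite_N finite_branch centre_notin_branch)
  also have "sum h (\<Union>u\<in>N. leg u) = (\<Sum>u\<in>N. sum h (leg u))"
    by (rule sum.UNION_disjoint) (auto simp: finite_N finite_branch dest: leg_unique)
  finally show ?thesis .
qed

lemma Rset_N_subset_legs:
  assumes u: "u \<in> N" and w: "w \<in> N" and "u \<noteq> w"
  shows "Rset V adj u w \<subseteq> leg u \<union> leg w"
proof
  fix z assume "z \<in> Rset V adj u w"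
  then have z: "z \<in> V" and ne: "gdist adj u z \<noteq> gdist adj w z" unfolding Rset_def by auto
  have "z \<noteq> v" using ne gdist_commute[OF _ v_in_V] N_subset_V u w depth_N by (metis subsetD)
  then obtain m where m: "m \<in> N" "z \<in> leg m" using in_some_leg z by blast
  have "m = u \<or> m = w"
    using gdist_distinct_legs[OF u m(1) _ self_in_leg[OF u] m(2)]
      gdist_distinct_legs[OF w m(1) _ self_in_leg[OF w] m(2)] ne depth_N u w by force
  then show "z \<in> leg u \<union> leg w" using m by auto
qed

lemma resolving_fun_legs_pair:
  assumes h: "resolving_fun V adj h" and "u \<in> N" and "w \<in> N" and "u \<noteq> w"
  shows "1 \<le> sum h (leg u) + sum h (leg w)"
proof -
  have "1 \<le> sum h (Rset V adj u w)"
    using h assms(2-4) N_subset_V unfolding resolving_fun_def by auto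
  also have "\<dots> \<le> sum h (leg u \<union> leg w)"
    using h Rset_N_subset_legs[OF assms(2-4)] leg_subset_V unfolding resolving_fun_def
    by (intro sum_mono2) (auto simp: finite_branch)
  also have "\<dots> = sum h (leg u) + sum h (leg w)"
    using leg_unique assms(2-4) by (intro sum.union_disjoint) (auto simp: finite_branch)
  finally show ?thesis .
qed

lemma resolving_fun_sum_ge:
  assumes h: "resolving_fun V adj h"
  shows "card N / 2 \<le> sum h V"
proof -
  have "card N / 2 \<le> (\<Sum>u\<in>N. sum h (leg u))"
    using resolving_fun_legs_pair[OF h] finite_N card_N_ge_3
    by (intro sum_ge_half_card_if_pairwise_ge_1) auto
  moreover have "0 \<le> h v" using h v_in_V unfolding resolving_fun_def by auto
  ultimately show ?thesis using sum_V_eq_legs[of h] by simp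
qed

lemma Rset_k_deep_subset_leg:
  assumes u: "u \<in> N" and x: "x \<in> leg u" and y: "y \<in> leg u"
    and "K \<le> depth x" and "K \<le> depth y"
  shows "Rset_k V adj K x y \<subseteq> insert v (leg u)"
proof
  fix z assume "z \<in> Rset_k V adj K x y"
  then have z: "z \<in> V" and ne: "tdist adj K x z \<noteq> tdist adj K y z" unfolding Rset_k_def by auto
  show "z \<in> insert v (leg u)"
  proof (rule ccontr)
    assume "z \<notin> insert v (leg u)"
    then obtain m where "m \<in> N" "z \<in> leg m" "m \<noteq> u" using in_some_leg z by (metis insertCI)
    then have "gdist adj x z = depth x + depth z" "gdist adj y z = depth y + depth z" "0 < depth z"
      using gdist_distinct_legs u x y depth_leg_pos by auto
    then show False using ne assms(4,5) unfolding tdist_def by auto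
  qed
qed

text \<open>A leaf deeper than \<open>K\<close> and its neighbour are \<open>K\<close>-resolved only by \<open>v\<close> and vertices of
  their own leg, which therefore carry weight \<open>1\<close> instead of the \<open>1/2\<close> a leg needs otherwise.\<close>

lemma k_resolving_fun_sum_ge_long_leg:
  assumes h: "k_resolving_fun V adj K h" and "0 < K"
    and l: "leaf V adj l" and long: "K < depth l"
  shows "card N / 2 + 1/2 \<le> sum h V"
proof -
  obtain u where u: "u \<in> N" "l \<in> leg u" using leaf_in_some_leg[OF l] .
  have lV: "l \<in> V" "l \<noteq> v" using u(2) leg_subset_V centre_notin_branch by auto
  define p where "p = parent v l"
  have p: "adj p l" "depth p + 1 = depth l" using parent_v[OF lV] p_def by auto
  have pu: "p \<in> leg u" using parent_in_leg[OF u] long \<open>0 < K\<close> p_def by simp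
  have "p \<noteq> l" using p(1) adj_irrefl by auto
  then have "1 \<le> sum h (Rset_k V adj K p l)"
    using h lV adj_in_V p(1) unfolding k_resolving_fun_def by blast
  also have "\<dots> \<le> sum h (insert v (leg u))"
  proof (rule sum_mono2)
    show "Rset_k V adj K p l \<subseteq> insert v (leg u)"
      using Rset_k_deep_subset_leg[OF u(1) pu u(2)] p(2) long by simp
    show "0 \<le> h z" if "z \<in> insert v (leg u) - Rset_k V adj K p l" for z
      using that h leg_subset_V v_in_V unfolding k_resolving_fun_def by blast
  qed (simp add: finite_branch)
  finally have "1 \<le> h v + sum h (leg u)" by (simp add: finite_branch centre_notin_branch)
  moreover have "card (N - {u}) / 2 \<le> (\<Sum>w\<in>N - {u}. sum h (leg w))"
    using resolving_fun_legs_pair[OF k_resolving_fun_imp_resolving_fun[OF finite_V h]]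
      finite_N card_N_ge_3 u(1)
    by (intro sum_ge_half_card_if_pairwise_ge_1) (auto simp: card_Diff_singleton)
  moreover have "real (card (N - {u})) = real (card N) - 1"
    using u(1) finite_N card_N_ge_3 by (simp add: card_Diff_singleton)
  ultimately show ?thesis
    using sum_V_eq_legs[of h] sum.remove[OF finite_N u(1), of "\<lambda>w. sum h (leg w)"] by simp
qed

definition quarter_weight :: "'a \<Rightarrow> real" where
  "quarter_weight x = (if x \<in> N then 1/4 else 0) + (if leaf V adj x then 1/4 else 0)"

lemma quarter_weight_nonneg: "0 \<le> quarter_weight x"
  unfolding quarter_weight_def by simp

lemma quarter_weight_le_1: "quarter_weight x \<le> 1"
  unfolding quarter_weight_def by simp

lemma sum_quarter_weight: "sum quarter_weight V = card N / 2"
proof -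
  have "sum quarter_weight V = card (V \<inter> N) / 4 + card (V \<inter> {l. leaf V adj l}) / 4"
    unfolding quarter_weight_def by (simp add: sum.distrib sum.If_cases finite_V)
  also have "V \<inter> N = N" using N_subset_V by auto
  also have "V \<inter> {l. leaf V adj l} = {l. leaf V adj l}" unfolding leaf_def by auto
  finally show ?thesis using card_leaves by simp
qed

lemma sum_quarter_weight_legs_le:
  assumes "R \<subseteq> V" and "M \<subseteq> N"
  shows "(\<Sum>u\<in>M. sum quarter_weight (R \<inter> leg u)) \<le> sum quarter_weight R"
proof -
  have "(\<Sum>u\<in>M. sum quarter_weight (R \<inter> leg u)) = sum quarter_weight (\<Union>u\<in>M. R \<inter> leg u)"
    using assms(2) finite_subset[OF assms(2) finite_N] leg_unique
    by (intro sum.UNION_disjoint[symmetric]) (auto simp: finite_branch, blast)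
  also have "\<dots> \<le> sum quarter_weight R"
    using assms(1) finite_V
      by (intro sum_mono2) (auto simp: quarter_weight_nonneg intro: finite_subset)
  finally show ?thesis .
qed

lemma quarter_weight_leg_ge_quarter:
  assumes u: "u \<in> N" and "u \<in> R \<or> leg_end u \<in> R"
  shows "1/4 \<le> sum quarter_weight (R \<inter> leg u)"
proof -
  obtain x where x: "x \<in> R \<inter> leg u" "x = u \<or> x = leg_end u"
    using assms self_in_leg leg_end(1) by blast
  then have "1/4 \<le> quarter_weight x" using u leg_end(2) unfolding quarter_weight_def by auto
  also have "\<dots> \<le> sum quarter_weight (R \<inter> leg u)"
    using x(1) finite_branch quarter_weight_nonneg by (intro member_le_sum) auto
  finally show ?thesis .
qed

lemma quarter_weight_leg_ge_half:
  assumes u: "u \<in> N" and "u \<in> R" and "leg_end u \<in> R"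
  shows "1/2 \<le> sum quarter_weight (R \<inter> leg u)"
proof -
  have "1/2 \<le> sum quarter_weight {u, leg_end u}"
    using u leg_end(2)[OF u] by (cases "leg_end u = u") (auto simp: quarter_weight_def)
  also have "\<dots> \<le> sum quarter_weight (R \<inter> leg u)"
    using assms self_in_leg leg_end(1) finite_branch quarter_weight_nonneg by (intro sum_mono2) auto
  finally show ?thesis .
qed

lemma exists_other_leg:
  assumes "i \<in> N" and "j \<in> N"
  obtains m where "m \<in> N" and "m \<noteq> i" and "m \<noteq> j"
proof -
  have "card {i, j} \<le> 2" by (simp add: card_insert_if)
  then have "\<not> N \<subseteq> {i, j}" using card_N_ge_3 card_mono[of "{i, j}" N] by auto
  then show ?thesis using that by blast
qed

context
  fixes K :: nat
  assumes K_pos: "0 < K" and leaves_within_K: "\<And>l. leaf V adj l \<Longrightarrow> depth l \<le> K"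
begin

lemma depth_le_K: "u \<in> N \<Longrightarrow> x \<in> leg u \<Longrightarrow> depth x \<le> K"
  using depth_le_leg_end leaves_within_K leg_end(2) order_trans by blast

lemma quarter_weight_resolves_centre:
  assumes i: "i \<in> N" and y: "y \<in> leg i"
  shows "1 \<le> sum quarter_weight (Rset_k V adj K v y)"
proof -
  let ?R = "Rset_k V adj K v y"
  have half: "1/2 \<le> sum quarter_weight (?R \<inter> leg m)" if m: "m \<in> N" "m \<noteq> i" for m
  proof (rule quarter_weight_leg_ge_half[OF m(1)])
    have mm: "m \<in> leg m" using self_in_leg[OF m(1)] .
    have "gdist adj y m = depth y + 1" using gdist_distinct_legs[OF i m(1) _ y mm] m depth_N by simp
    then show "m \<in> ?R"
      using m(1) N_subset_V depth_N[OF m(1)] K_pos depth_leg_pos[OF y] by (intro Rset_kI) auto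
    have e: "leg_end m \<in> leg m" using leg_end(1)[OF m(1)] .
    have "gdist adj y (leg_end m) = depth y + depth (leg_end m)"
      using gdist_distinct_legs[OF i m(1) _ y e] m by simp
    then show "leg_end m \<in> ?R"
      using e leg_subset_V depth_le_K[OF m(1) e] depth_leg_pos[OF y] by (intro Rset_kI) auto
  qed
  obtain m1 where m1: "m1 \<in> N" "m1 \<noteq> i" using exists_other_leg[OF i i] by metis
  obtain m2 where m2: "m2 \<in> N" "m2 \<noteq> i" "m2 \<noteq> m1" using exists_other_leg[OF i m1(1)] by metis
  have "(\<Sum>m\<in>{m1, m2}. sum quarter_weight (?R \<inter> leg m)) \<le> sum quarter_weight ?R"
    using m1 m2 by (intro sum_quarter_weight_legs_le Rset_k_subset_V) auto
  then show ?thesis using half[OF m1] half[OF m2(1,2)] m2(3) by simp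
qed

lemma quarter_weight_resolves_same_leg:
  assumes i: "i \<in> N" and x: "x \<in> leg i" and y: "y \<in> leg i" and lt: "depth x < depth y"
  shows "1 \<le> sum quarter_weight (Rset_k V adj K x y)"
proof -
  let ?R = "Rset_k V adj K x y"
  have ii: "i \<in> leg i" using self_in_leg[OF i] .
  have e: "leg_end i \<in> leg i" using leg_end(1)[OF i] .
  have x1: "1 \<le> depth x" using depth_leg_pos[OF x] by simp
  have yK: "depth y \<le> K" using depth_le_K[OF i y] .
  have "gdist adj x i = depth x - 1" "gdist adj y i = depth y - 1"
    using depth_leg[OF x] depth_leg[OF y] by simp_all
  then have "i \<in> ?R" using ii leg_subset_V x1 lt yK by (intro Rset_kI) auto
  moreover have "leg_end i \<in> ?R"
    using e leg_subset_V gdist_same_leg[OF i x e] gdist_same_leg[OF i y e] lt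
      depth_le_leg_end[OF i y] depth_le_K[OF i e]
    by (intro Rset_kI) auto
  ultimately have "1/2 \<le> sum quarter_weight (?R \<inter> leg i)" by (rule quarter_weight_leg_ge_half[OF i])
  moreover have quarter: "1/4 \<le> sum quarter_weight (?R \<inter> leg m)" if m: "m \<in> N" "m \<noteq> i" for m
  proof (rule quarter_weight_leg_ge_quarter[OF m(1)], rule disjI1)
    have mm: "m \<in> leg m" using self_in_leg[OF m(1)] .
    have "gdist adj x m = depth x + 1" "gdist adj y m = depth y + 1"
      using gdist_distinct_legs[OF i m(1) _ _ mm] x y m depth_N by auto
    then show "m \<in> ?R" using m(1) N_subset_V lt yK by (intro Rset_kI) auto
  qed
  obtain m1 where m1: "m1 \<in> N" "m1 \<noteq> i" using exists_other_leg[OF i i] by metis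
  obtain m2 where m2: "m2 \<in> N" "m2 \<noteq> i" "m2 \<noteq> m1" using exists_other_leg[OF i m1(1)] by metis
  have "(\<Sum>m\<in>{i, m1, m2}. sum quarter_weight (?R \<inter> leg m)) \<le> sum quarter_weight ?R"
    using i m1 m2 by (intro sum_quarter_weight_legs_le Rset_k_subset_V) auto
  ultimately show ?thesis using quarter[OF m1] quarter[OF m2(1,2)] m1(2) m2(2,3) by simp
qed

lemma leg_end_in_Rset_k_distinct_legs:
  assumes i: "i \<in> N" and j: "j \<in> N" and "i \<noteq> j" and x: "x \<in> leg i" and y: "y \<in> leg j"
  shows "leg_end i \<in> Rset_k V adj K x y"
proof -
  have e: "leg_end i \<in> leg i" using leg_end(1)[OF i] .
  have "gdist adj y (leg_end i) = depth y + depth (leg_end i)"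
    using gdist_distinct_legs[OF j i _ y e] \<open>i \<noteq> j\<close> by simp
  then show ?thesis
    using gdist_same_leg[OF i x e] depth_le_leg_end[OF i x] e leg_subset_V depth_le_K[OF i e]
      depth_leg_pos[OF y]
    by (intro Rset_kI) auto
qed

lemma N_in_Rset_k_distinct_legs:
  assumes i: "i \<in> N" and j: "j \<in> N" and "i \<noteq> j" and x: "x \<in> leg i" and y: "y \<in> leg j"
    and "depth x \<noteq> depth y + 2"
  shows "i \<in> Rset_k V adj K x y"
proof -
  have ii: "i \<in> leg i" using self_in_leg[OF i] .
  have "gdist adj x i = depth x - 1" using depth_leg[OF x] by simp
  moreover have "gdist adj y i = depth y + 1"
    using gdist_distinct_legs[OF j i _ y ii] \<open>i \<noteq> j\<close> depth_N[OF i] by simp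
  ultimately show ?thesis
    using assms(6) depth_le_K[OF i x] ii leg_subset_V by (intro Rset_kI) auto
qed

text \<open>The leg of the nearer vertex \<open>x\<close> is always worth \<open>1/2\<close>, that of \<open>y\<close> too unless
  \<open>depth y = depth x + 2\<close>; in that case a third leg makes up the difference.\<close>

lemma quarter_weight_resolves_distinct_legs:
  assumes i: "i \<in> N" and j: "j \<in> N" and "i \<noteq> j" and x: "x \<in> leg i" and y: "y \<in> leg j"
    and le: "depth x \<le> depth y"
  shows "1 \<le> sum quarter_weight (Rset_k V adj K x y)"
proof -
  let ?R = "Rset_k V adj K x y"
  have leg_i: "1/2 \<le> sum quarter_weight (?R \<inter> leg i)"
    using quarter_weight_leg_ge_half[OF i] N_in_Rset_k_distinct_legs[OF i j \<open>i \<noteq> j\<close> x y]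
      leg_end_in_Rset_k_distinct_legs[OF i j \<open>i \<noteq> j\<close> x y] le
    by simp
  have ej: "leg_end j \<in> ?R"
    using leg_end_in_Rset_k_distinct_legs[OF j i \<open>i \<noteq> j\<close>[symmetric] y x]
    by (simp add: Rset_k_commute[of V adj K y x])
  show ?thesis
  proof (cases "depth y = depth x + 2")
    case False
    then have "j \<in> ?R"
      using N_in_Rset_k_distinct_legs[OF j i \<open>i \<noteq> j\<close>[symmetric] y x]
      by (simp add: Rset_k_commute[of V adj K y x])
    then have "1/2 \<le> sum quarter_weight (?R \<inter> leg j)"
      using quarter_weight_leg_ge_half[OF j _ ej] by simp
    moreover have "(\<Sum>u\<in>{i, j}. sum quarter_weight (?R \<inter> leg u)) \<le> sum quarter_weight ?R"
      using i j by (intro sum_quarter_weight_legs_le Rset_k_subset_V) auto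
    ultimately show ?thesis using leg_i \<open>i \<noteq> j\<close> by simp
  next
    case True
    obtain m where m: "m \<in> N" "m \<noteq> i" "m \<noteq> j" using exists_other_leg[OF i j] by metis
    have mm: "m \<in> leg m" using self_in_leg[OF m(1)] .
    have "gdist adj x m = depth x + 1" "gdist adj y m = depth y + 1"
      using gdist_distinct_legs[OF i m(1) _ x mm] gdist_distinct_legs[OF j m(1) _ y mm] m depth_N
      by auto
    then have "m \<in> ?R"
      using m(1) N_subset_V True depth_le_K[OF j y] by (intro Rset_kI) auto
    then have "1/4 \<le> sum quarter_weight (?R \<inter> leg m)"
      using quarter_weight_leg_ge_quarter[OF m(1)] by blast
    moreover have "1/4 \<le> sum quarter_weight (?R \<inter> leg j)"
      using quarter_weight_leg_ge_quarter[OF j] ej by blast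
    moreover have "(\<Sum>u\<in>{i, j, m}. sum quarter_weight (?R \<inter> leg u)) \<le> sum quarter_weight ?R"
      using i j m by (intro sum_quarter_weight_legs_le Rset_k_subset_V) auto
    ultimately show ?thesis using leg_i m \<open>i \<noteq> j\<close> by simp
  qed
qed

lemma quarter_weight_resolves:
  assumes "x \<in> V" and "y \<in> V" and "x \<noteq> y"
  shows "1 \<le> sum quarter_weight (Rset_k V adj K x y)"
proof -
  have ordered: "1 \<le> sum quarter_weight (Rset_k V adj K x y)"
    if x: "x \<in> V" and y: "y \<in> V" and "x \<noteq> y" and le: "depth x \<le> depth y" for x y
  proof (cases "x = v")
    case True
    then have "y \<noteq> v" using \<open>x \<noteq> y\<close> by simp
    then obtain j where "j \<in> N" "y \<in> leg j" using in_some_leg y by blast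
    then show ?thesis using quarter_weight_resolves_centre True by simp
  next
    case False
    then obtain i where i: "i \<in> N" "x \<in> leg i" using in_some_leg x by blast
    have "y \<noteq> v" using le depth_leg_pos[OF i(2)] by auto
    then obtain j where j: "j \<in> N" "y \<in> leg j" using in_some_leg y by blast
    show ?thesis
    proof (cases "i = j")
      case True
      then have "depth x < depth y" using leg_depth_inj[OF i(1) i(2)] j(2) le \<open>x \<noteq> y\<close> by fastforce
      then show ?thesis using quarter_weight_resolves_same_leg i j True by blast
    next
      case False
      then show ?thesis using quarter_weight_resolves_distinct_legs i j le by blast
    qed
  qed
  show ?thesis
    using ordered[OF assms] ordered[OF assms(2,1) assms(3)[symmetric]]
    by (cases "depth x \<le> depth y") (simp_all add: Rset_k_commute[of V adj K y x])
qed

lemma quarter_weight_k_resolving: "k_resolving_fun V adj K quarter_weight"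
  unfolding k_resolving_fun_def
  using quarter_weight_resolves quarter_weight_nonneg quarter_weight_le_1 by blast

lemma frac_dim_k_eq: "frac_dim_k V adj K = card N / 2"
  unfolding frac_dim_k_def
proof (rule cInf_eq_minimum)
  show "card N / 2 \<in> {sum h V |h. k_resolving_fun V adj K h}"
    using quarter_weight_k_resolving sum_quarter_weight by force
  show "card N / 2 \<le> s" if "s \<in> {sum h V |h. k_resolving_fun V adj K h}" for s
    using that resolving_fun_sum_ge k_resolving_fun_imp_resolving_fun[OF finite_V] by blast
qed

end

lemma frac_dim_eq: "frac_dim V adj = card N / 2"
proof -
  define K where "K = Max (depth ` V)"
  have depth_le: "depth x \<le> K" if "x \<in> V" for x
    unfolding K_def using finite_V that by simp
  obtain u where "u \<in> N" using card_N_ge_3 by fastforce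
  then have "0 < K" using depth_le[of u] depth_N N_subset_V by fastforce
  then have "k_resolving_fun V adj K quarter_weight"
    using quarter_weight_k_resolving depth_le unfolding leaf_def by blast
  then have "resolving_fun V adj quarter_weight"
    by (rule k_resolving_fun_imp_resolving_fun[OF finite_V])
  then have "card N / 2 \<in> {sum g V |g. resolving_fun V adj g}" using sum_quarter_weight by force
  then show ?thesis unfolding frac_dim_def
    using resolving_fun_sum_ge by (intro cInf_eq_minimum) auto
qed

lemma frac_dim_k_ge_long_leg:
  assumes "0 < K" and "leaf V adj l" and "K < depth l"
  shows "card N / 2 + 1/2 \<le> frac_dim_k V adj K"
  unfolding frac_dim_k_def
  using k_resolving_fun_one k_resolving_fun_sum_ge_long_leg[OF _ assms]
  by (intro cInf_greatest) auto

end

theorem proposition3p18: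
  fixes V :: "'a set" and adj :: "'a \<Rightarrow> 'a \<Rightarrow> bool" and k :: nat and v :: 'a
  assumes "k > 0"
    and "is_tree V adj"
    and "ex_num V adj = 1"
    and "exterior_major V adj v"
  shows "frac_dim_k V adj k = frac_dim V adj \<longleftrightarrow>
           (\<forall>l. terminal V adj v l \<longrightarrow> gdist adj v l \<le> k)"
proof -
  interpret tree V adj
    using assms(2) by (rule tree.intro)
  interpret spider V adj v
    using assms(2-4) major_unique_if_ex_num_eq_1
    by unfold_locales (auto simp: is_tree exterior_major_def)
  have terminal_iff_leaf: "terminal V adj v l \<longleftrightarrow> leaf V adj l" for l
    using major_v major_unique unfolding terminal_def by blast
  show ?thesis
  proof
    assume "frac_dim_k V adj k = frac_dim V adj"
    then show "\<forall>l. terminal V adj v l \<longrightarrow> gdist adj v l \<le> k"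
      using frac_dim_k_ge_long_leg[OF assms(1)] frac_dim_eq terminal_iff_leaf by force
  next
    assume "\<forall>l. terminal V adj v l \<longrightarrow> gdist adj v l \<le> k"
    then show "frac_dim_k V adj k = frac_dim V adj"
      using frac_dim_k_eq[OF assms(1)] frac_dim_eq terminal_iff_leaf by simp
  qed
qed

end
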